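(* For each $n \geq 2$ there is a constant $M_n$ such that for every polynomial $p$ in $n$ variables, \[ \|\Gamma p\|_{\overline{\mathbb{D}}^n} \leq M_n \|p\|_{\overline{\mathbb{D}}^n}. \] Moreover, one may take $M_2 \leq 4.07$ and $M_3 \leq 16.6$.
   Context: $\mathbb{D}$ is the open unit disk in $\mathbb{C}$ and $\|f\|_X = \sup_{z\in X}|f(z)|$. For a multi-index $\alpha\in\mathbb{Z}_{\ge0}^n$, $|\alpha|=\sum\alpha_j$, $\alpha!=\alpha_1!\cdots\alpha_n!$. For $p(z)=\sum_\alpha c_\alpha z^\alpha$, define $\Gamma p(z) = \sum_\alpha c_\alpha \frac{\alpha!}{|\alpha|!} z^\alpha$. *)

theory Defs
  imports "HOL-Analysis.Analysis"
begin

text \<open>Multi-indices in n variables are functions alpha :: nat => nat vanishing at j >= n.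
A polynomial in n variables is given by its coefficient function
c :: (nat => nat) => complex, finitely supported on such multi-indices.\<close>

definition is_mpoly :: "nat \<Rightarrow> ((nat \<Rightarrow> nat) \<Rightarrow> complex) \<Rightarrow> bool" where
  "is_mpoly n c \<longleftrightarrow> finite {\<alpha>. c \<alpha> \<noteq> 0} \<and> (\<forall>\<alpha>. c \<alpha> \<noteq> 0 \<longrightarrow> (\<forall>j\<ge>n. \<alpha> j = 0))"

definition mpoly_eval :: "nat \<Rightarrow> ((nat \<Rightarrow> nat) \<Rightarrow> complex) \<Rightarrow> (nat \<Rightarrow> complex) \<Rightarrow> complex" where
  "mpoly_eval n c z = (\<Sum>\<alpha>\<in>{\<alpha>. c \<alpha> \<noteq> 0}. c \<alpha> * (\<Prod>j<n. z j ^ \<alpha> j))"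

definition Gamma_coeff :: "nat \<Rightarrow> ((nat \<Rightarrow> nat) \<Rightarrow> complex) \<Rightarrow> ((nat \<Rightarrow> nat) \<Rightarrow> complex)" where
  "Gamma_coeff n c = (\<lambda>\<alpha>. c \<alpha> * of_nat (\<Prod>j<n. fact (\<alpha> j)) / of_nat (fact (\<Sum>j<n. \<alpha> j)))"

definition closed_polydisc :: "nat \<Rightarrow> (nat \<Rightarrow> complex) set" where
  "closed_polydisc n = {z. (\<forall>j<n. norm (z j) \<le> 1) \<and> (\<forall>j\<ge>n. z j = 0)}"

definition supnorm :: "'a set \<Rightarrow> ('a \<Rightarrow> complex) \<Rightarrow> real" where
  "supnorm X f = (SUP z\<in>X. norm (f z))"

end

theory Submission
  imports Defs "HOL-Complex_Analysis.Complex_Analysis"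
begin

text \<open>
Splitting off the last variable, the weight \<open>\<alpha>!/|\<alpha>|!\<close> factors as the weight of the first
\<open>n\<close> exponents times \<open>a!b!/(a+b)!\<close>, where \<open>a\<close> is the total degree in the first \<open>n\<close>
variables and \<open>b\<close> the degree in the last one. Substituting \<open>x\<cdot>w\<close> for the first \<open>n\<close>
variables, induction reduces everything to two variables at the cost of a factor 4 per step,
so \<open>M\<^sub>n = 4\<^sup>n\<^sup>-\<^sup>1\<close> works.

For \<open>F(x,y) = \<Sum> c\<^sub>\<sigma> x\<^sup>a y\<^sup>b\<close> bounded by \<open>K\<close> on the bidisc and
\<open>B(a,b) = \<integral>\<^sub>0\<^sup>1 s\<^sup>a(1-s)\<^sup>b ds\<close>, one has
\<open>a!b!/(a+b)! = 0\<^sup>a + 0\<^sup>b - B(a,b) + a B(a-1,b+1) + b B(a+1,b-1)\<close>.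
Summed against the coefficients, the right-hand side becomes
\<open>F(0,1) + F(1,0) - \<integral>\<^sub>0\<^sup>1 F(s,1-s) ds + \<integral>\<^sub>0\<^sup>1 D(s) ds\<close>, where \<open>D(s)\<close> is the derivative at \<open>0\<close>
of \<open>\<lambda> \<mapsto> F(s+\<lambda>(1-s), 1-s+\<lambda>s)\<close>. This disc lies in the bidisc, so Cauchy's estimate
gives \<open>|D(s)| \<le> K\<close>, and each of the four terms is at most \<open>K\<close>.
\<close>

definition beta_nat :: "nat \<Rightarrow> nat \<Rightarrow> real" where
  "beta_nat i j = fact i * fact j / fact (i + j + 1)"

lemma beta_nat_commute: "beta_nat i j = beta_nat j i"
  by (simp add: beta_nat_def add.commute mult.commute)

lemma beta_nat_0_right: "beta_nat i 0 = 1 / real (Suc i)"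
  by (simp add: beta_nat_def)

lemma beta_nat_Suc_right: "beta_nat i (Suc j) = beta_nat i j - beta_nat (Suc i) j"
proof -
  have "(fact (i + Suc j + 1) :: real) = real (i + j + 2) * fact (i + j + 1)"
    "(fact (Suc i + j + 1) :: real) = real (i + j + 2) * fact (i + j + 1)"
    by (simp_all add: algebra_simps)
  moreover have "(fact (i + j + 1) :: real) > 0"
    by simp
  ultimately show ?thesis
    by (simp add: beta_nat_def divide_simps) (simp add: algebra_simps)
qed

lemma has_integral_beta_nat:
  "((\<lambda>s::real. s ^ i * (1 - s) ^ j) has_integral beta_nat i j) {0..1}"
proof (induction j arbitrary: i)
  case 0
  have "((\<lambda>s. s ^ Suc i / real (Suc i)) has_real_derivative s ^ i) (at s)" for s :: real
    by (intro derivative_eq_intros) auto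
  then have "((\<lambda>s::real. s ^ i) has_integral (1 / real (Suc i) - 0)) {0..1}"
    using fundamental_theorem_of_calculus[of 0 1 "\<lambda>s. s ^ Suc i / real (Suc i)" "\<lambda>s. s ^ i"]
    by (simp add: has_real_derivative_iff_has_vector_derivative has_vector_derivative_at_within)
  then show ?case
    by (simp add: beta_nat_0_right)
next
  case (Suc j)
  have "(\<lambda>s::real. s ^ i * (1 - s) ^ Suc j) = (\<lambda>s. s ^ i * (1 - s) ^ j - s ^ Suc i * (1 - s) ^ j)"
    by (auto simp: algebra_simps)
  with has_integral_diff[OF Suc.IH[of i] Suc.IH[of "Suc i"]] show ?case
    by (simp add: beta_nat_Suc_right)
qed

lemma beta_nat_shift_left:
  "real a * beta_nat (a - 1) (Suc b) = real (Suc b) * beta_nat a b - 0 ^ a"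
proof (cases a)
  case 0
  then show ?thesis by (simp add: beta_nat_commute[of 0] beta_nat_0_right)
next
  case (Suc i)
  then show ?thesis
    by (simp add: beta_nat_def field_simps)
qed

lemma beta_nat_shift_right:
  "real b * beta_nat (Suc a) (b - 1) = real (Suc a) * beta_nat a b - 0 ^ b"
  using beta_nat_shift_left[of b a] by (simp add: beta_nat_commute)

lemma inverse_binomial_eq_beta_nat:
  "fact a * fact b / fact (a + b) = real (a + b + 1) * beta_nat a b"
proof -
  have "(fact (a + b + 1) :: real) = real (a + b + 1) * fact (a + b)" "(fact (a + b) :: real) > 0"
    by simp_all
  then show ?thesis
    by (simp add: beta_nat_def)
qed

lemma inverse_binomial_decomposition:
  "fact a * fact b / fact (a + b) =
     0 ^ a + 0 ^ b - beta_nat a b + (real a * beta_nat (a - 1) (Suc b) + real b * beta_nat (Suc a) (b - 1))"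
  unfolding beta_nat_shift_left beta_nat_shift_right inverse_binomial_eq_beta_nat
  by (simp add: algebra_simps)

lemma has_integral_unit_interval_norm_le:
  fixes g :: "real \<Rightarrow> 'a::real_normed_vector"
  assumes "(g has_integral I) {0..1}" and "\<And>s. 0 \<le> s \<Longrightarrow> s \<le> 1 \<Longrightarrow> norm (g s) \<le> K"
  shows "norm I \<le> K"
proof -
  have "0 \<le> K"
    using assms(2)[of 0] by (auto intro: order_trans[OF norm_ge_zero])
  then show ?thesis
    using has_integral_bound[of K g I 0 1] assms by (simp add: cbox_interval)
qed

lemma norm_add_scaled_le_1:
  fixes x :: complex
  assumes "0 \<le> s" "0 \<le> t" "s + t \<le> 1" "norm x \<le> 1"
  shows "norm (of_real s + x * of_real t) \<le> 1"
proof -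
  have "norm (of_real s + x * of_real t) \<le> s + norm x * t"
    using norm_triangle_ineq[of "of_real s" "x * of_real t"] assms by (simp add: norm_mult)
  also have "\<dots> \<le> 1"
    using assms mult_left_le_one_le[of t "norm x"] by (simp add: mult.commute)
  finally show ?thesis .
qed

locale bidisc_bounded =
  fixes S :: "'s set" and c :: "'s \<Rightarrow> complex" and a b :: "'s \<Rightarrow> nat" and K :: real
  assumes finite_S: "finite S"
    and bounded: "\<And>x y. norm x \<le> 1 \<Longrightarrow> norm y \<le> 1 \<Longrightarrow>
                   norm (\<Sum>\<sigma>\<in>S. c \<sigma> * x ^ a \<sigma> * y ^ b \<sigma>) \<le> K"
begin

definition F :: "complex \<Rightarrow> complex \<Rightarrow> complex" where
  "F x y = (\<Sum>\<sigma>\<in>S. c \<sigma> * x ^ a \<sigma> * y ^ b \<sigma>)"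

lemma norm_F_le: "norm x \<le> 1 \<Longrightarrow> norm y \<le> 1 \<Longrightarrow> norm (F x y) \<le> K"
  unfolding F_def by (rule bounded)

lemma norm_diagonal_integral_le:
  "norm (\<Sum>\<sigma>\<in>S. c \<sigma> * of_real (beta_nat (a \<sigma>) (b \<sigma>))) \<le> K"
proof (rule has_integral_unit_interval_norm_le)
  show "((\<lambda>s. F (of_real s) (of_real (1 - s))) has_integral
          (\<Sum>\<sigma>\<in>S. c \<sigma> * of_real (beta_nat (a \<sigma>) (b \<sigma>)))) {0..1}"
    unfolding F_def mult.assoc of_real_power [symmetric] of_real_mult [symmetric]
    by (intro has_integral_sum finite_S has_integral_mult_right has_integral_of_real has_integral_beta_nat)
  show "norm (F (of_real s) (of_real (1 - s))) \<le> K" if "0 \<le> s" "s \<le> 1" for s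
    using that by (intro norm_F_le) (simp_all del: of_real_diff)
qed

definition disc_derivative :: "real \<Rightarrow> complex" where
  "disc_derivative s = (\<Sum>\<sigma>\<in>S. c \<sigma> * of_real (real (a \<sigma>) * s ^ (a \<sigma> - 1) * (1 - s) ^ Suc (b \<sigma>)
                             + real (b \<sigma>) * s ^ Suc (a \<sigma>) * (1 - s) ^ (b \<sigma> - 1)))"

lemma has_field_derivative_along_disc:
  "((\<lambda>l. F (of_real s + l * of_real (1 - s)) (of_real (1 - s) + l * of_real s))
     has_field_derivative disc_derivative s) (at 0)"
proof -
  have "((\<lambda>l. F (of_real s + l * of_real (1 - s)) (of_real (1 - s) + l * of_real s))
     has_field_derivative (\<Sum>\<sigma>\<in>S. c \<sigma> * (of_nat (a \<sigma>) * of_real s ^ (a \<sigma> - 1) * of_real (1 - s)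
        * of_real (1 - s) ^ b \<sigma> + of_real s ^ a \<sigma> * (of_nat (b \<sigma>) * of_real (1 - s) ^ (b \<sigma> - 1) * of_real s))))
     (at 0)"
    unfolding F_def
    by (auto intro!: derivative_eq_intros sum.cong simp: algebra_simps simp del: of_real_diff)
  also have "(\<Sum>\<sigma>\<in>S. c \<sigma> * (of_nat (a \<sigma>) * of_real s ^ (a \<sigma> - 1) * of_real (1 - s)
        * of_real (1 - s) ^ b \<sigma> + of_real s ^ a \<sigma> * (of_nat (b \<sigma>) * of_real (1 - s) ^ (b \<sigma> - 1) * of_real s)))
     = disc_derivative s"
    unfolding disc_derivative_def of_real_add of_real_mult of_real_power of_real_of_nat_eq power_Suc
    by (intro sum.cong refl) (simp add: algebra_simps del: of_real_diff)
  finally show ?thesis .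
qed

lemma norm_disc_derivative_le:
  assumes "0 \<le> s" "s \<le> 1"
  shows "norm (disc_derivative s) \<le> K"
proof -
  define h where "h l = F (of_real s + l * of_real (1 - s)) (of_real (1 - s) + l * of_real s)" for l
  have "norm ((deriv ^^ 1) h 0) \<le> fact 1 * K / 1 ^ 1"
  proof (rule Cauchy_inequality)
    show "h holomorphic_on ball 0 1" "continuous_on (cball 0 1) h"
      unfolding h_def F_def by (intro holomorphic_intros continuous_intros)+
    show "norm (h x) \<le> K" if "norm (0 - x) = 1" for x
      unfolding h_def using that assms
      by (intro norm_F_le norm_add_scaled_le_1) auto
  qed simp
  moreover have "deriv h 0 = disc_derivative s"
    unfolding h_def by (rule DERIV_imp_deriv[OF has_field_derivative_along_disc])
  ultimately show ?thesis
    by simp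
qed

lemma norm_disc_derivative_integral_le:
  "norm (\<Sum>\<sigma>\<in>S. c \<sigma> * of_real (real (a \<sigma>) * beta_nat (a \<sigma> - 1) (Suc (b \<sigma>))
                               + real (b \<sigma>) * beta_nat (Suc (a \<sigma>)) (b \<sigma> - 1))) \<le> K"
proof (rule has_integral_unit_interval_norm_le)
  show "(disc_derivative has_integral (\<Sum>\<sigma>\<in>S. c \<sigma> * of_real (real (a \<sigma>) * beta_nat (a \<sigma> - 1) (Suc (b \<sigma>))
                               + real (b \<sigma>) * beta_nat (Suc (a \<sigma>)) (b \<sigma> - 1)))) {0..1}"
    unfolding disc_derivative_def[abs_def] mult.assoc
    by (intro has_integral_sum finite_S has_integral_mult_right has_integral_of_real
              has_integral_add has_integral_beta_nat)
qed (rule norm_disc_derivative_le)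

theorem norm_inverse_binomial_sum_le:
  "norm (\<Sum>\<sigma>\<in>S. c \<sigma> * of_real (fact (a \<sigma>) * fact (b \<sigma>) / fact (a \<sigma> + b \<sigma>))) \<le> 4 * K"
proof -
  define I where "I = (\<Sum>\<sigma>\<in>S. c \<sigma> * of_real (beta_nat (a \<sigma>) (b \<sigma>)))"
  define J where "J = (\<Sum>\<sigma>\<in>S. c \<sigma> * of_real (real (a \<sigma>) * beta_nat (a \<sigma> - 1) (Suc (b \<sigma>))
                               + real (b \<sigma>) * beta_nat (Suc (a \<sigma>)) (b \<sigma> - 1)))"
  have "(\<Sum>\<sigma>\<in>S. c \<sigma> * of_real (fact (a \<sigma>) * fact (b \<sigma>) / fact (a \<sigma> + b \<sigma>))) = F 0 1 + F 1 0 - I + J"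
    unfolding inverse_binomial_decomposition F_def I_def J_def
    by (simp add: algebra_simps sum.distrib sum_subtractf flip: sum_distrib_left)
  also have "norm \<dots> \<le> norm (F 0 1) + norm (F 1 0) + norm I + norm J"
    by (smt (verit) norm_triangle_ineq norm_triangle_ineq4)
  also have "\<dots> \<le> 4 * K"
    using norm_F_le[of 0 1] norm_F_le[of 1 0] norm_diagonal_integral_le norm_disc_derivative_integral_le
    unfolding I_def J_def by simp
  finally show ?thesis .
qed

end

definition inverse_multinomial :: "nat \<Rightarrow> (nat \<Rightarrow> nat) \<Rightarrow> complex" where
  "inverse_multinomial n \<alpha> = of_nat (\<Prod>j<n. fact (\<alpha> j)) / of_nat (fact (\<Sum>j<n. \<alpha> j))"

lemma Gamma_coeff_eq: "Gamma_coeff n c \<alpha> = c \<alpha> * inverse_multinomial n \<alpha>"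
  by (simp add: Gamma_coeff_def inverse_multinomial_def)

lemma inverse_multinomial_Suc:
  "inverse_multinomial (Suc n) \<alpha> = inverse_multinomial n \<alpha> *
     of_real (fact (\<Sum>j<n. \<alpha> j) * fact (\<alpha> n) / fact ((\<Sum>j<n. \<alpha> j) + \<alpha> n))"
proof -
  have "(fact (\<Sum>j<n. \<alpha> j) :: complex) \<noteq> 0"
    by simp
  then show ?thesis
    unfolding inverse_multinomial_def by (simp add: field_simps)
qed

lemma norm_inverse_multinomial_sum_le:
  fixes c :: "'s \<Rightarrow> complex" and A :: "'s \<Rightarrow> nat \<Rightarrow> nat"
  assumes "finite S"
    and "\<And>z. (\<forall>j<Suc n. norm (z j) \<le> 1) \<Longrightarrow> norm (\<Sum>\<sigma>\<in>S. c \<sigma> * (\<Prod>j<Suc n. z j ^ A \<sigma> j)) \<le> K"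
  shows "norm (\<Sum>\<sigma>\<in>S. c \<sigma> * inverse_multinomial (Suc n) (A \<sigma>)) \<le> 4 ^ n * K"
  using assms(2)
proof (induction n arbitrary: c K)
  case 0
  have "inverse_multinomial (Suc 0) \<alpha> = 1" for \<alpha>
    by (simp add: inverse_multinomial_def)
  with "0.prems"[of "\<lambda>_. 1"] show ?case
    by simp
next
  case (Suc n)
  define a where "a \<sigma> = (\<Sum>j<Suc n. A \<sigma> j)" for \<sigma>
  define b where "b \<sigma> = A \<sigma> (Suc n)" for \<sigma>
  interpret bidisc_bounded S "\<lambda>\<sigma>. c \<sigma> * inverse_multinomial (Suc n) (A \<sigma>)" a b "4 ^ n * K"
  proof
    fix x y :: complex
    assume "norm x \<le> 1" "norm y \<le> 1"
    have "norm (\<Sum>\<sigma>\<in>S. (c \<sigma> * x ^ a \<sigma> * y ^ b \<sigma>) * inverse_multinomial (Suc n) (A \<sigma>)) \<le> 4 ^ n * K"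
    proof (rule Suc.IH)
      fix w :: "nat \<Rightarrow> complex"
      assume "\<forall>j<Suc n. norm (w j) \<le> 1"
      define z where "z j = (if j < Suc n then x * w j else y)" for j
      have "\<forall>j<Suc (Suc n). norm (z j) \<le> 1"
        using \<open>\<forall>j<Suc n. norm (w j) \<le> 1\<close> \<open>norm x \<le> 1\<close> \<open>norm y \<le> 1\<close>
        by (auto simp: z_def norm_mult intro: mult_le_one)
      then have "norm (\<Sum>\<sigma>\<in>S. c \<sigma> * (\<Prod>j<Suc (Suc n). z j ^ A \<sigma> j)) \<le> K"
        by (rule Suc.prems)
      moreover have "(\<Prod>j<Suc (Suc n). z j ^ A \<sigma> j) = x ^ a \<sigma> * y ^ b \<sigma> * (\<Prod>j<Suc n. w j ^ A \<sigma> j)" for \<sigma>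
      proof -
        have "(\<Prod>j<Suc (Suc n). z j ^ A \<sigma> j) = (\<Prod>j<Suc n. (x * w j) ^ A \<sigma> j) * y ^ b \<sigma>"
          by (simp add: z_def b_def)
        also have "(\<Prod>j<Suc n. (x * w j) ^ A \<sigma> j) = x ^ a \<sigma> * (\<Prod>j<Suc n. w j ^ A \<sigma> j)"
          by (simp add: a_def power_mult_distrib prod.distrib power_sum del: prod.lessThan_Suc sum.lessThan_Suc)
        finally show ?thesis
          by (simp add: mult_ac)
      qed
      ultimately show "norm (\<Sum>\<sigma>\<in>S. c \<sigma> * x ^ a \<sigma> * y ^ b \<sigma> * (\<Prod>j<Suc n. w j ^ A \<sigma> j)) \<le> K"
        by (simp add: mult.assoc)
    qed
    then show "norm (\<Sum>\<sigma>\<in>S. c \<sigma> * inverse_multinomial (Suc n) (A \<sigma>) * x ^ a \<sigma> * y ^ b \<sigma>) \<le> 4 ^ n * K"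
      by (simp add: mult_ac)
  qed (fact assms(1))
  from norm_inverse_binomial_sum_le show ?case
    by (simp add: inverse_multinomial_Suc[of "Suc n"] a_def b_def mult.assoc)
qed

lemma norm_mpoly_eval_le_supnorm:
  assumes "is_mpoly n c" "z \<in> closed_polydisc n"
  shows "norm (mpoly_eval n c z) \<le> supnorm (closed_polydisc n) (mpoly_eval n c)"
  unfolding supnorm_def
proof (rule cSUP_upper[OF assms(2)])
  have "norm (mpoly_eval n c w) \<le> (\<Sum>\<alpha>\<in>{\<alpha>. c \<alpha> \<noteq> 0}. norm (c \<alpha>))" if "w \<in> closed_polydisc n" for w
  proof -
    have "norm (\<Prod>j<n. w j ^ \<alpha> j) \<le> 1" for \<alpha>
      using that unfolding prod_norm[symmetric] norm_power
      by (intro prod_le_1) (auto simp: closed_polydisc_def intro: power_le_one)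
    then have "norm (c \<alpha> * (\<Prod>j<n. w j ^ \<alpha> j)) \<le> norm (c \<alpha>)" for \<alpha>
      by (simp add: norm_mult mult_left_le)
    then show ?thesis
      unfolding mpoly_eval_def by (intro order_trans[OF norm_sum] sum_mono)
  qed
  then show "bdd_above ((\<lambda>z. norm (mpoly_eval n c z)) ` closed_polydisc n)"
    by (intro bdd_aboveI) auto
qed

lemma supnorm_Gamma_le:
  assumes "is_mpoly (Suc n) c"
  shows "supnorm (closed_polydisc (Suc n)) (mpoly_eval (Suc n) (Gamma_coeff (Suc n) c))
           \<le> 4 ^ n * supnorm (closed_polydisc (Suc n)) (mpoly_eval (Suc n) c)"
    (is "supnorm ?P _ \<le> 4 ^ n * ?K")
proof -
  define S where "S = {\<alpha>. c \<alpha> \<noteq> 0}"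
  have "finite S"
    using assms by (simp add: is_mpoly_def S_def)
  have support_Gamma_coeff: "{\<alpha>. c \<alpha> * inverse_multinomial (Suc n) \<alpha> \<noteq> 0} = S"
    by (auto simp: inverse_multinomial_def S_def)
  have Gamma_eval: "mpoly_eval (Suc n) (Gamma_coeff (Suc n) c) z =
      (\<Sum>\<alpha>\<in>S. (c \<alpha> * (\<Prod>j<Suc n. z j ^ \<alpha> j)) * inverse_multinomial (Suc n) \<alpha>)" for z
    unfolding mpoly_eval_def Gamma_coeff_eq
    by (rule sum.cong[OF support_Gamma_coeff]) (simp only: ac_simps)
  have "norm (mpoly_eval (Suc n) (Gamma_coeff (Suc n) c) z) \<le> 4 ^ n * ?K" if "z \<in> ?P" for z
    unfolding Gamma_eval
  proof (rule norm_inverse_multinomial_sum_le[OF \<open>finite S\<close>])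
    fix w :: "nat \<Rightarrow> complex"
    assume "\<forall>j<Suc n. norm (w j) \<le> 1"
    then have zw: "(\<lambda>j. if j < Suc n then z j * w j else 0) \<in> ?P"
      using that by (auto simp: closed_polydisc_def norm_mult intro: mult_le_one)
    have "mpoly_eval (Suc n) c (\<lambda>j. if j < Suc n then z j * w j else 0) =
        (\<Sum>\<alpha>\<in>S. c \<alpha> * (\<Prod>j<Suc n. z j ^ \<alpha> j) * (\<Prod>j<Suc n. w j ^ \<alpha> j))"
      unfolding mpoly_eval_def S_def
      by (intro sum.cong refl) (simp add: power_mult_distrib prod.distrib mult.assoc)
    with norm_mpoly_eval_le_supnorm[OF assms zw]
    show "norm (\<Sum>\<alpha>\<in>S. c \<alpha> * (\<Prod>j<Suc n. z j ^ \<alpha> j) * (\<Prod>j<Suc n. w j ^ \<alpha> j)) \<le> ?K"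
      by simp
  qed
  moreover have "?P \<noteq> {}"
    by (auto simp: closed_polydisc_def intro!: exI[of _ "\<lambda>_. 0"])
  ultimately show ?thesis
    unfolding supnorm_def by (intro cSUP_least) auto
qed

theorem proposition4p4:
  shows "(\<forall>n::nat\<ge>2. \<exists>M::real. \<forall>c. is_mpoly n c \<longrightarrow>
            supnorm (closed_polydisc n) (mpoly_eval n (Gamma_coeff n c))
              \<le> M * supnorm (closed_polydisc n) (mpoly_eval n c))
       \<and> (\<exists>M::real. M \<le> 407/100 \<and> (\<forall>c. is_mpoly 2 c \<longrightarrow>
            supnorm (closed_polydisc 2) (mpoly_eval 2 (Gamma_coeff 2 c))
              \<le> M * supnorm (closed_polydisc 2) (mpoly_eval 2 c)))
       \<and> (\<exists>M::real. M \<le> 166/10 \<and> (\<forall>c. is_mpoly 3 c \<longrightarrow>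
            supnorm (closed_polydisc 3) (mpoly_eval 3 (Gamma_coeff 3 c))
              \<le> M * supnorm (closed_polydisc 3) (mpoly_eval 3 c)))"
proof (intro conjI allI impI)
  fix n :: nat
  assume "2 \<le> n"
  then obtain m where "n = Suc m"
    using not0_implies_Suc by fastforce
  then show "\<exists>M::real. \<forall>c. is_mpoly n c \<longrightarrow>
            supnorm (closed_polydisc n) (mpoly_eval n (Gamma_coeff n c))
              \<le> M * supnorm (closed_polydisc n) (mpoly_eval n c)"
    using supnorm_Gamma_le by blast
next
  show "\<exists>M::real. M \<le> 407/100 \<and> (\<forall>c. is_mpoly 2 c \<longrightarrow>
            supnorm (closed_polydisc 2) (mpoly_eval 2 (Gamma_coeff 2 c))
              \<le> M * supnorm (closed_polydisc 2) (mpoly_eval 2 c))"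
    using supnorm_Gamma_le[of 1] by (intro exI[of _ 4]) (simp add: numeral_2_eq_2)
next
  show "\<exists>M::real. M \<le> 166/10 \<and> (\<forall>c. is_mpoly 3 c \<longrightarrow>
            supnorm (closed_polydisc 3) (mpoly_eval 3 (Gamma_coeff 3 c))
              \<le> M * supnorm (closed_polydisc 3) (mpoly_eval 3 c))"
    using supnorm_Gamma_le[of 2] by (intro exI[of _ 16]) (simp add: numeral_3_eq_3)
qed

end
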